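(* In $\mathrm{OPT}_\tau$, every loop whose entry points lie on $C_{\tau+1}$ (the bottom cover-line of $S_\tau$) either exclusively covers a top segment, or is a cover-line loop. The analogous statement holds for loops with entry points on $C_\tau$ (with bottom segments in place of top segments).
   Context: Instance: vertical line segments in $\mathbb{R}^2$, each of length $1$, with pairwise distinct $x$-coordinates; the minimal bounding box has height $H>3$. A tour is a cyclic sequence of points, each on some segment, with each segment containing one of them; consecutive points are joined by straight legs; cost is total length. $\mathrm{OPT}$ is a fixed oriented minimum-cost tour with no two consecutive points on the same segment and not self-crossing. Cover-lines: horizontal lines $C_1,C_2,\dots$ (top to bottom) spaced $1$ apart, $C_1$ through the bottom tip of the top-most segment; a segment is covered by the top-most cover-line intersecting it. Strip $S_\tau$: closed region between $C_\tau$ and $C_{\tau+1}$; top segments of $S_\tau$: those intersecting $C_\tau$; bottom segments: those covered by $C_{\tau+1}$. $\mathrm{OPT}_\tau$: restriction of $\mathrm{OPT}$ to $S_\tau$ (points added where legs meet the cover-lines), a collection of subpaths each with two entry points on the cover-lines; a loop has both entry points on the same cover-line. A cover-line loop is a loop that enters $S_\tau$ at a point of a cover-line, travels along that cover-line and exits. A segment $s$ in $S_\tau$ is exclusively covered by a path $P$ of $\mathrm{OPT}_\tau$ if $P$ intersects $s$ and no other path of $\mathrm{OPT}_\tau$ intersects $s$. *)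

theory Defs
  imports "HOL-Analysis.Analysis"
begin

type_synonym pt = "real \<times> real"

text \<open>A vertical segment of length 1 is represented by its bottom endpoint (x, y);
  it consists of the points (x, y + t) with 0 <= t <= 1.\<close>
definition seg :: "pt \<Rightarrow> pt set" where
  "seg s = {(fst s, snd s + t) | t. 0 \<le> t \<and> t \<le> 1}"

definition instance_ok :: "pt set \<Rightarrow> bool" where
  "instance_ok I \<longleftrightarrow> finite I \<and> I \<noteq> {} \<and> inj_on fst I"

definition height :: "pt set \<Rightarrow> real" where
  "height I = (Max (snd ` I) + 1) - Min (snd ` I)"

text \<open>y-coordinate of cover-line C_k (k >= 1); C_1 passes through the bottom tip
  of the top-most segment, consecutive cover-lines are spaced 1 apart.\<close>
definition cover_y :: "pt set \<Rightarrow> nat \<Rightarrow> real" where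
  "cover_y I k = Max (snd ` I) - (real k - 1)"

definition cover_line :: "pt set \<Rightarrow> nat \<Rightarrow> pt set" where
  "cover_line I k = {p. snd p = cover_y I k}"

definition covered_by :: "pt set \<Rightarrow> pt \<Rightarrow> nat \<Rightarrow> bool" where
  "covered_by I s k \<longleftrightarrow> k \<ge> 1 \<and> seg s \<inter> cover_line I k \<noteq> {} \<and>
     (\<forall>j. 1 \<le> j \<and> j < k \<longrightarrow> seg s \<inter> cover_line I j = {})"

definition strip :: "pt set \<Rightarrow> nat \<Rightarrow> pt set" where
  "strip I \<tau> = {p. cover_y I (\<tau> + 1) \<le> snd p \<and> snd p \<le> cover_y I \<tau>}"

definition top_seg :: "pt set \<Rightarrow> nat \<Rightarrow> pt \<Rightarrow> bool" where
  "top_seg I \<tau> s \<longleftrightarrow> s \<in> I \<and> seg s \<inter> cover_line I \<tau> \<noteq> {}"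

definition bottom_seg :: "pt set \<Rightarrow> nat \<Rightarrow> pt \<Rightarrow> bool" where
  "bottom_seg I \<tau> s \<longleftrightarrow> s \<in> I \<and> covered_by I s (\<tau> + 1)"

definition is_tour :: "pt set \<Rightarrow> pt list \<Rightarrow> bool" where
  "is_tour I ps \<longleftrightarrow> ps \<noteq> [] \<and> (\<forall>p\<in>set ps. \<exists>s\<in>I. p \<in> seg s) \<and>
     (\<forall>s\<in>I. \<exists>p\<in>set ps. p \<in> seg s)"

definition nxt :: "pt list \<Rightarrow> nat \<Rightarrow> pt" where
  "nxt ps i = ps ! ((i + 1) mod length ps)"

definition tour_cost :: "pt list \<Rightarrow> real" where
  "tour_cost ps = (\<Sum>i<length ps. dist (ps ! i) (nxt ps i))"

definition legs_cross :: "pt \<Rightarrow> pt \<Rightarrow> pt \<Rightarrow> pt \<Rightarrow> bool" where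
  "legs_cross p q r s \<longleftrightarrow> (\<exists>z. closed_segment p q \<inter> closed_segment r s = {z} \<and>
      z \<noteq> p \<and> z \<noteq> q \<and> z \<noteq> r \<and> z \<noteq> s)"

definition is_OPT :: "pt set \<Rightarrow> pt list \<Rightarrow> bool" where
  "is_OPT I ps \<longleftrightarrow> is_tour I ps \<and> (\<forall>qs. is_tour I qs \<longrightarrow> tour_cost ps \<le> tour_cost qs) \<and>
     (\<forall>i<length ps. \<forall>s\<in>I. \<not> (ps ! i \<in> seg s \<and> nxt ps i \<in> seg s)) \<and>
     (\<forall>i<length ps. \<forall>j<length ps. i \<noteq> j \<longrightarrow>
        \<not> legs_cross (ps ! i) (nxt ps i) (ps ! j) (nxt ps j))"

text \<open>The closed polygonal curve of the tour, parametrised periodically with period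
  length ps; on [i, i+1] it traverses the leg from ps!i to its successor.\<close>
definition tour_curve :: "pt list \<Rightarrow> real \<Rightarrow> pt" where
  "tour_curve ps t = (let n = real (length ps); u = t - n * of_int \<lfloor>t / n\<rfloor>;
      i = nat \<lfloor>u\<rfloor>; r = u - real i in (1 - r) *\<^sub>R (ps ! i) + r *\<^sub>R nxt ps i)"

text \<open>A path of the restriction of the tour to a region S: a maximal parameter interval
  [a,b] whose image lies in S (normalised by 0 <= a < length ps).  Its entry points are
  tour_curve ps a and tour_curve ps b.\<close>
definition restr_path :: "pt list \<Rightarrow> pt set \<Rightarrow> real \<Rightarrow> real \<Rightarrow> bool" where
  "restr_path ps S a b \<longleftrightarrow> 0 \<le> a \<and> a < real (length ps) \<and> a \<le> b \<and>
     tour_curve ps ` {a..b} \<subseteq> S \<and>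
     (\<forall>a' b'. a' \<le> a \<and> b \<le> b' \<and> tour_curve ps ` {a'..b'} \<subseteq> S \<longrightarrow> a' = a \<and> b' = b)"

definition excl_covers :: "pt list \<Rightarrow> pt set \<Rightarrow> real \<Rightarrow> real \<Rightarrow> pt \<Rightarrow> bool" where
  "excl_covers ps S a b s \<longleftrightarrow> tour_curve ps ` {a..b} \<inter> seg s \<noteq> {} \<and>
     (\<forall>a' b'. restr_path ps S a' b' \<and> a' \<noteq> a \<longrightarrow> tour_curve ps ` {a'..b'} \<inter> seg s = {})"

definition loop_on :: "pt list \<Rightarrow> pt set \<Rightarrow> real \<Rightarrow> real \<Rightarrow> bool" where
  "loop_on ps L a b \<longleftrightarrow> tour_curve ps a \<in> L \<and> tour_curve ps b \<in> L"

definition cover_line_loop :: "pt list \<Rightarrow> pt set \<Rightarrow> real \<Rightarrow> real \<Rightarrow> bool" where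
  "cover_line_loop ps L a b \<longleftrightarrow> loop_on ps L a b \<and> tour_curve ps ` {a..b} \<subseteq> L"

end

theory Submission
  imports Defs
begin

text \<open>Suppose a loop of the tour with both ends on a horizontal line L leaves L, and replace it
  by its vertical projection onto L. Every segment met by the loop that also meets L is still
  visited, at the projected point, and the projection is strictly shorter because the loop is not
  horizontal. By optimality the result cannot be a tour, so some segment met by the loop misses
  L and is visited nowhere else; it is therefore exclusively covered by the loop, and as it meets
  the strip but misses L it crosses the opposite cover-line. Lengths are compared via arc length:
  the excess of the tour's length over that of its horizontal projection is nondecreasing, and
  constant only along horizontal stretches.\<close>

section \<open>The periodic parametrisation of a tour\<close>

lemma nat_mod_add_one:
  assumes "n > 0"
  shows "(nat (x mod int n) + 1) mod n = nat ((x + 1) mod int n)"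
proof -
  have "int ((nat (x mod int n) + 1) mod n) = (x mod int n + 1) mod int n"
    using assms by (simp add: zmod_int add.commute)
  also have "\<dots> = (x + 1) mod int n" by (metis mod_add_left_eq)
  finally show ?thesis by (metis nat_int)
qed

lemma tour_curve_eq_floor:
  assumes "ps \<noteq> []"
  shows "tour_curve ps t = (1 - (t - of_int \<lfloor>t\<rfloor>)) *\<^sub>R ps ! nat (\<lfloor>t\<rfloor> mod int (length ps))
     + (t - of_int \<lfloor>t\<rfloor>) *\<^sub>R ps ! nat ((\<lfloor>t\<rfloor> + 1) mod int (length ps))"
proof -
  define n where "n = length ps"
  have n: "n > 0" using assms n_def by simp
  define q where "q = \<lfloor>t / real n\<rfloor>"
  define u where "u = t - real n * of_int q"
  have "\<lfloor>u\<rfloor> = \<lfloor>t\<rfloor> - int n * q"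
    using floor_diff_of_int[of t "int n * q"] by (simp add: u_def)
  moreover have "\<lfloor>t\<rfloor> div int n = q"
    using floor_divide_real_eq_div[of "int n" t] by (simp add: q_def)
  ultimately have fu: "\<lfloor>u\<rfloor> = \<lfloor>t\<rfloor> mod int n"
    by (metis minus_div_mult_eq_mod mult.commute)
  have "real (nat \<lfloor>u\<rfloor>) = of_int \<lfloor>t\<rfloor> - real n * of_int q"
    using \<open>\<lfloor>u\<rfloor> = \<lfloor>t\<rfloor> - int n * q\<close> fu pos_mod_sign[of "int n" "\<lfloor>t\<rfloor>"] n
    by (simp del: pos_mod_sign)
  hence r: "u - real (nat \<lfloor>u\<rfloor>) = t - of_int \<lfloor>t\<rfloor>" by (simp add: u_def)
  have "tour_curve ps t = (1 - (u - real (nat \<lfloor>u\<rfloor>))) *\<^sub>R ps ! nat \<lfloor>u\<rfloor>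
     + (u - real (nat \<lfloor>u\<rfloor>)) *\<^sub>R ps ! ((nat \<lfloor>u\<rfloor> + 1) mod n)"
    unfolding tour_curve_def Let_def nxt_def n_def u_def q_def ..
  thus ?thesis unfolding r unfolding fu n_def[symmetric] nat_mod_add_one[OF n] .
qed

lemma tour_curve_on_leg:
  assumes "ps \<noteq> []" "of_int k \<le> t" "t \<le> of_int k + 1"
  shows "tour_curve ps t = (1 - (t - of_int k)) *\<^sub>R ps ! nat (k mod int (length ps))
     + (t - of_int k) *\<^sub>R ps ! nat ((k + 1) mod int (length ps))"
proof (cases "t < of_int k + 1")
  case True
  hence "\<lfloor>t\<rfloor> = k" using assms by (simp add: floor_eq_iff)
  thus ?thesis using tour_curve_eq_floor[OF assms(1), of t] by simp
next
  case False
  hence t: "t = of_int (k + 1)" using assms by simp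
  hence "\<lfloor>t\<rfloor> = k + 1" by simp
  thus ?thesis using tour_curve_eq_floor[OF assms(1), of t] t by simp
qed

lemma tour_curve_periodic:
  assumes "ps \<noteq> []"
  shows "tour_curve ps (t + of_int m * real (length ps)) = tour_curve ps t"
proof -
  let ?n = "int (length ps)"
  have "t + of_int m * real (length ps) = t + of_int (m * ?n)" by simp
  hence f: "\<lfloor>t + of_int m * real (length ps)\<rfloor> = \<lfloor>t\<rfloor> + m * ?n"
    by (simp only: floor_add_int)
  have m1: "(\<lfloor>t\<rfloor> + m * ?n) mod ?n = \<lfloor>t\<rfloor> mod ?n" by simp
  have m2: "(\<lfloor>t\<rfloor> + m * ?n + 1) mod ?n = (\<lfloor>t\<rfloor> + 1) mod ?n"
  proof -
    have "\<lfloor>t\<rfloor> + m * ?n + 1 = (\<lfloor>t\<rfloor> + 1) + m * ?n" by simp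
    thus ?thesis by (simp only: mod_mult_self1)
  qed
  have r: "t + of_int m * real (length ps) - of_int (\<lfloor>t\<rfloor> + m * ?n) = t - of_int \<lfloor>t\<rfloor>"
    by simp
  show ?thesis
    unfolding tour_curve_eq_floor[OF assms, of "t + of_int m * real (length ps)"] f m1 m2 r
    by (rule tour_curve_eq_floor[OF assms, symmetric])
qed

lemma tour_curve_of_nat:
  assumes "i < length ps"
  shows "tour_curve ps (real i) = ps ! i"
proof -
  have "ps \<noteq> []" using assms by auto
  thus ?thesis using tour_curve_eq_floor[of ps "real i"] assms by (simp add: zmod_int)
qed

lemma tour_curve_image_shift:
  assumes "ps \<noteq> []"
  shows "tour_curve ps ` {x + of_int m * real (length ps) .. y + of_int m * real (length ps)}
    = tour_curve ps ` {x..y}"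
proof -
  have "{x + of_int m * real (length ps) .. y + of_int m * real (length ps)}
      = (\<lambda>u. u + of_int m * real (length ps)) ` {x..y}"
    by simp
  thus ?thesis by (simp only: image_image tour_curve_periodic[OF assms] image_ident)
qed

lemma exists_shift_into_period:
  assumes "n > 0"
  shows "\<exists>m::int. a \<le> x + of_int m * real n \<and> x + of_int m * real n < a + real n"
proof -
  define m where "m = \<lfloor>(x - a) / real n\<rfloor>"
  have "of_int m * real n \<le> x - a" "x - a < (of_int m + 1) * real n"
    unfolding m_def using floor_divide_lower[of "real n" "x - a"]
      floor_divide_upper[of "real n" "x - a"] assms by simp_all
  thus ?thesis by (intro exI[of _ "-m"]) (auto simp: algebra_simps)
qed

section \<open>Arc length\<close>

text \<open>With f j the length of leg j of a closed polygon with n legs, arc_length n f t is the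
  distance travelled from parameter 0 to t, continued to all real t.\<close>

definition cum_length :: "nat \<Rightarrow> (nat \<Rightarrow> real) \<Rightarrow> int \<Rightarrow> real" where
  "cum_length n f k = of_int (k div int n) * (\<Sum>j<n. f j) + (\<Sum>j<nat (k mod int n). f j)"

definition arc_length :: "nat \<Rightarrow> (nat \<Rightarrow> real) \<Rightarrow> real \<Rightarrow> real" where
  "arc_length n f t = cum_length n f \<lfloor>t\<rfloor> + (t - of_int \<lfloor>t\<rfloor>) * f (nat (\<lfloor>t\<rfloor> mod int n))"

lemma cum_length_Suc:
  assumes "n > 0"
  shows "cum_length n f (k + 1) = cum_length n f k + f (nat (k mod int n))"
proof -
  define q where "q = k div int n"
  define r where "r = k mod int n"
  have kq: "k = r + q * int n" unfolding q_def r_def by simp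
  have r0: "0 \<le> r" "r < int n" unfolding r_def using assms by simp_all
  have nz: "int n \<noteq> 0" using assms by simp
  show ?thesis
  proof (cases "r + 1 < int n")
    case True
    have e: "k + 1 = (r + 1) + q * int n" using kq by simp
    have d: "(k + 1) div int n = q"
      unfolding e using div_mult_self1[OF nz, of "r + 1" q] True r0 by simp
    have m: "(k + 1) mod int n = r + 1"
      unfolding e using mod_mult_self1[of "r + 1" q "int n"] True r0 by simp
    have "nat (r + 1) = Suc (nat r)" using r0 by simp
    thus ?thesis unfolding cum_length_def d m q_def[symmetric] r_def[symmetric] by simp
  next
    case False
    hence rr: "r = int n - 1" using r0 by simp
    have e: "k + 1 = 0 + (q + 1) * int n" using kq rr by (simp add: algebra_simps)
    have d: "(k + 1) div int n = q + 1"
      unfolding e using div_mult_self1[OF nz, of 0 "q + 1"] by simp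
    have m: "(k + 1) mod int n = 0"
      unfolding e using mod_mult_self1[of 0 "q + 1" "int n"] by simp
    have nn: "nat r = n - 1" using rr by simp
    have s: "(\<Sum>j<n. f j) = (\<Sum>j<n - 1. f j) + f (n - 1)"
      using assms by (metis Suc_pred' sum.lessThan_Suc)
    show ?thesis unfolding cum_length_def d m q_def[symmetric] r_def[symmetric] nn using s
      by (simp add: algebra_simps)
  qed
qed

lemma arc_length_on_leg:
  assumes "n > 0" "of_int k \<le> t" "t \<le> of_int k + 1"
  shows "arc_length n f t = cum_length n f k + (t - of_int k) * f (nat (k mod int n))"
proof (cases "t < of_int k + 1")
  case True
  hence "\<lfloor>t\<rfloor> = k" using assms by (simp add: floor_eq_iff)
  thus ?thesis unfolding arc_length_def by simp
next
  case False
  hence t: "t = of_int (k + 1)" using assms by simp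
  hence "\<lfloor>t\<rfloor> = k + 1" by simp
  thus ?thesis unfolding arc_length_def using cum_length_Suc[OF assms(1), of f k] t by simp
qed

lemma arc_length_diff_on_leg:
  assumes "n > 0" "of_int k \<le> s" "s \<le> t" "t \<le> of_int k + 1"
  shows "arc_length n f t - arc_length n f s = (t - s) * f (nat (k mod int n))"
  using arc_length_on_leg[OF assms(1), of k s f] arc_length_on_leg[OF assms(1), of k t f] assms
  by (simp add: algebra_simps)

lemma arc_length_add_period:
  assumes "n > 0"
  shows "arc_length n f (t + real n) = arc_length n f t + (\<Sum>j<n. f j)"
proof -
  have f: "\<lfloor>t + real n\<rfloor> = \<lfloor>t\<rfloor> + int n"
    by (metis floor_add_int of_int_of_nat_eq)
  have d: "(\<lfloor>t\<rfloor> + int n) div int n = \<lfloor>t\<rfloor> div int n + 1" using assms by simp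
  have m: "(\<lfloor>t\<rfloor> + int n) mod int n = \<lfloor>t\<rfloor> mod int n" by simp
  show ?thesis unfolding arc_length_def cum_length_def f d m by (simp add: algebra_simps)
qed

lemma arc_length_diff:
  "arc_length n (\<lambda>j. f j - g j) t = arc_length n f t - arc_length n g t"
  unfolding arc_length_def cum_length_def by (simp add: sum_subtractf algebra_simps)

lemma unit_interval_induct [consumes 1, case_names leg trans]:
  fixes Q :: "real \<Rightarrow> real \<Rightarrow> bool"
  assumes "s \<le> t"
    and leg: "\<And>k s t. of_int k \<le> s \<Longrightarrow> s \<le> t \<Longrightarrow> t \<le> of_int k + 1 \<Longrightarrow> Q s t"
    and trans: "\<And>s u t. s \<le> u \<Longrightarrow> u \<le> t \<Longrightarrow> Q s u \<Longrightarrow> Q u t \<Longrightarrow> Q s t"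
  shows "Q s t"
proof -
  have "Q s t" if "s \<le> t" "nat (\<lfloor>t\<rfloor> - \<lfloor>s\<rfloor>) = m" for m s
    using that
  proof (induction m arbitrary: s rule: less_induct)
    case (less m)
    show ?case
    proof (cases "\<lfloor>t\<rfloor> = \<lfloor>s\<rfloor>")
      case True
      show ?thesis by (rule leg[of "\<lfloor>s\<rfloor>"]) (use less.prems True in \<open>auto, linarith\<close>)
    next
      case False
      let ?u = "of_int (\<lfloor>s\<rfloor> + 1) :: real"
      have "\<lfloor>s\<rfloor> < \<lfloor>t\<rfloor>" using less.prems False floor_mono[of s t] by simp
      hence ut: "?u \<le> t" by (metis le_floor_iff zless_imp_add1_zle)
      have su: "s \<le> ?u" by linarith
      have "nat (\<lfloor>t\<rfloor> - \<lfloor>?u\<rfloor>) < m"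
        using less.prems \<open>\<lfloor>s\<rfloor> < \<lfloor>t\<rfloor>\<close> by (simp only: floor_of_int)
      hence "Q ?u t" using less.IH[OF _ ut refl] by blast
      moreover have "Q s ?u" by (rule leg[of "\<lfloor>s\<rfloor>"]) (simp_all add: su)
      ultimately show ?thesis using trans[OF su ut] by blast
    qed
  qed
  thus ?thesis using assms(1) by blast
qed

lemma arc_length_mono:
  assumes n: "n > 0" and f: "\<And>j. j < n \<Longrightarrow> 0 \<le> f j" and "s \<le> t"
  shows "arc_length n f s \<le> arc_length n f t"
  using \<open>s \<le> t\<close>
proof (induction rule: unit_interval_induct)
  case (leg k s t)
  have "0 \<le> f (nat (k mod int n))" using f n by (simp add: nat_less_iff)
  hence "0 \<le> (t - s) * f (nat (k mod int n))" using leg by simp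
  thus ?case using arc_length_diff_on_leg[OF n leg, of f] by linarith
qed simp

definition leg_length :: "pt list \<Rightarrow> nat \<Rightarrow> real" where
  "leg_length ps k = dist (ps ! k) (nxt ps k)"

definition tour_arc :: "pt list \<Rightarrow> real \<Rightarrow> real" where
  "tour_arc ps = arc_length (length ps) (leg_length ps)"

lemma nxt_nat_mod:
  assumes "ps \<noteq> []"
  shows "nxt ps (nat (k mod int (length ps))) = ps ! nat ((k + 1) mod int (length ps))"
  unfolding nxt_def using nat_mod_add_one[of "length ps" k] assms by simp

lemma dist_affine_combinations:
  fixes P Q :: "'a::real_normed_vector"
  shows "dist ((1 - a) *\<^sub>R P + a *\<^sub>R Q) ((1 - b) *\<^sub>R P + b *\<^sub>R Q) = \<bar>b - a\<bar> * dist P Q"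
proof -
  have "((1 - a) *\<^sub>R P + a *\<^sub>R Q) - ((1 - b) *\<^sub>R P + b *\<^sub>R Q) = (b - a) *\<^sub>R (P - Q)"
    by (simp add: algebra_simps)
  thus ?thesis by (simp add: dist_norm)
qed

lemma dist_tour_curve_on_leg:
  assumes "ps \<noteq> []" "of_int k \<le> s" "s \<le> t" "t \<le> of_int k + 1"
  shows "dist (tour_curve ps s) (tour_curve ps t) = (t - s) * leg_length ps (nat (k mod int (length ps)))"
proof -
  have "s \<le> of_int k + 1" "of_int k \<le> t" using assms by linarith+
  thus ?thesis
    unfolding tour_curve_on_leg[OF assms(1,2) \<open>s \<le> of_int k + 1\<close>]
      tour_curve_on_leg[OF assms(1) \<open>of_int k \<le> t\<close> assms(4)] dist_affine_combinations
    using assms by (simp add: leg_length_def nxt_nat_mod)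
qed

lemma dist_tour_curve_le_tour_arc:
  assumes "ps \<noteq> []" "s \<le> t"
  shows "dist (tour_curve ps s) (tour_curve ps t) \<le> tour_arc ps t - tour_arc ps s"
  using assms(2)
proof (induction rule: unit_interval_induct)
  case (leg k s t)
  have "length ps > 0" using assms by simp
  thus ?case using dist_tour_curve_on_leg[OF assms(1) leg] arc_length_diff_on_leg[OF _ leg]
    unfolding tour_arc_def by simp
next
  case (trans s u t)
  thus ?case using dist_triangle[of "tour_curve ps s" "tour_curve ps t" "tour_curve ps u"] by linarith
qed

lemma tour_arc_add_period:
  assumes "ps \<noteq> []"
  shows "tour_arc ps (t + real (length ps)) = tour_arc ps t + tour_cost ps"
  using arc_length_add_period[of "length ps" "leg_length ps" t] assms
  unfolding tour_arc_def tour_cost_def leg_length_def by simp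

definition proj_line :: "real \<Rightarrow> pt \<Rightarrow> pt" where
  "proj_line c p = (fst p, c)"

lemma tour_curve_map_proj_line:
  assumes "ps \<noteq> []"
  shows "tour_curve (map (proj_line c) ps) t = proj_line c (tour_curve ps t)"
proof -
  have "nat (k mod int (length ps)) < length ps" for k
    using assms by (simp add: nat_less_iff)
  thus ?thesis using assms
    by (simp add: tour_curve_eq_floor proj_line_def prod_eq_iff algebra_simps)
qed

lemma dist_proj_line: "dist (proj_line c P) (proj_line c Q) = \<bar>fst P - fst Q\<bar>"
  by (simp add: proj_line_def dist_Pair_Pair dist_real_def)

lemma dist_proj_line_le: "dist (proj_line c P) (proj_line c Q) \<le> dist P Q"
  unfolding dist_proj_line using dist_fst_le[of P Q] by (simp add: dist_real_def)

lemma dist_proj_line_eq_iff: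
  "dist (proj_line c P) (proj_line c Q) = dist P Q \<longleftrightarrow> snd P = snd Q"
proof -
  have "dist P Q = sqrt ((fst P - fst Q)\<^sup>2 + (snd P - snd Q)\<^sup>2)"
    by (cases P, cases Q) (simp add: dist_Pair_Pair dist_real_def)
  moreover have "dist (proj_line c P) (proj_line c Q) = sqrt ((fst P - fst Q)\<^sup>2)"
    unfolding dist_proj_line by simp
  ultimately show ?thesis by (simp only: real_sqrt_eq_iff) simp
qed

lemma leg_length_map:
  assumes "k < length ps"
  shows "leg_length (map f ps) k = dist (f (ps ! k)) (f (nxt ps k))"
proof -
  have "Suc k mod length ps < length ps" by (rule mod_less_divisor) (use assms in linarith)
  thus ?thesis using assms by (simp add: leg_length_def nxt_def)
qed

definition excess_length :: "pt list \<Rightarrow> real \<Rightarrow> real \<Rightarrow> real" where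
  "excess_length ps c t = tour_arc ps t - tour_arc (map (proj_line c) ps) t"

lemma excess_length_eq_arc_length:
  "excess_length ps c =
     arc_length (length ps) (\<lambda>k. leg_length ps k - leg_length (map (proj_line c) ps) k)"
  by (simp add: fun_eq_iff excess_length_def tour_arc_def arc_length_diff)

lemma excess_length_mono:
  assumes "ps \<noteq> []" "s \<le> t"
  shows "excess_length ps c s \<le> excess_length ps c t"
  unfolding excess_length_eq_arc_length
proof (rule arc_length_mono)
  fix j assume "j < length ps"
  thus "0 \<le> leg_length ps j - leg_length (map (proj_line c) ps) j"
    using dist_proj_line_le[of c "ps ! j" "nxt ps j"] by (simp add: leg_length_map leg_length_def[of ps])
qed (use assms in simp_all)

lemma snd_tour_curve_eq_if_excess_length_eq:
  assumes "ps \<noteq> []" "s \<le> t" "excess_length ps c s = excess_length ps c t"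
  shows "snd (tour_curve ps s) = snd (tour_curve ps t)"
proof -
  have "excess_length ps c s = excess_length ps c t \<longrightarrow> snd (tour_curve ps s) = snd (tour_curve ps t)"
    using assms(2)
  proof (induction rule: unit_interval_induct)
    case (leg k s t)
    let ?j = "nat (k mod int (length ps))"
    have n: "length ps > 0" and j: "?j < length ps" using assms(1) by (simp_all add: nat_less_iff)
    show ?case
    proof
      assume eq: "excess_length ps c s = excess_length ps c t"
      have "(t - s) * (leg_length ps ?j - leg_length (map (proj_line c) ps) ?j) = 0"
        using arc_length_diff_on_leg[OF n leg,
            of "\<lambda>k. leg_length ps k - leg_length (map (proj_line c) ps) k"] eq
        unfolding excess_length_eq_arc_length by simp
      hence "s = t \<or> dist (proj_line c (ps ! ?j)) (proj_line c (nxt ps ?j)) = dist (ps ! ?j) (nxt ps ?j)"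
        using j by (auto simp: leg_length_map leg_length_def[of ps])
      thus "snd (tour_curve ps s) = snd (tour_curve ps t)"
      proof
        assume "dist (proj_line c (ps ! ?j)) (proj_line c (nxt ps ?j)) = dist (ps ! ?j) (nxt ps ?j)"
        hence "snd (ps ! ?j) = snd (ps ! nat ((k + 1) mod int (length ps)))"
          using assms(1) by (simp add: dist_proj_line_eq_iff nxt_nat_mod)
        moreover have "s \<le> of_int k + 1" "of_int k \<le> t" using leg by linarith+
        ultimately show ?thesis
          unfolding tour_curve_on_leg[OF assms(1) leg(1) \<open>s \<le> of_int k + 1\<close>]
            tour_curve_on_leg[OF assms(1) \<open>of_int k \<le> t\<close> leg(3)]
          by (simp add: algebra_simps)
      qed simp
    qed
  next
    case (trans s u t)
    thus ?case using excess_length_mono[OF assms(1), of s u c] excess_length_mono[OF assms(1), of u t c]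
      by linarith
  qed
  thus ?thesis using assms(3) by blast
qed

section \<open>Shortcutting a loop onto a line\<close>

lemma tour_cost_samples_le:
  fixes \<gamma> :: "real \<Rightarrow> pt" and \<Lambda> :: "real \<Rightarrow> real"
  assumes bd: "\<And>s t. w \<le> s \<Longrightarrow> s \<le> t \<Longrightarrow> t \<le> W \<Longrightarrow> dist (\<gamma> s) (\<gamma> t) \<le> \<Lambda> t - \<Lambda> s"
    and closed: "\<gamma> W = \<gamma> w" and T: "finite T" "T \<noteq> {}" "T \<subseteq> {w..W}"
  shows "tour_cost (map \<gamma> (sorted_list_of_set T)) \<le> \<Lambda> W - \<Lambda> w"
proof -
  define xs where "xs = sorted_list_of_set T"
  have sorted: "sorted xs" and set: "set xs = T" unfolding xs_def using T by simp_all
  then obtain k where k: "length xs = Suc k" using T by (metis empty_set list.exhaust_sel length_Cons)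
  have mem: "\<And>i. i < length xs \<Longrightarrow> xs ! i \<in> {w..W}" using set T(3) nth_mem by blast
  define g where "g i = dist (\<gamma> (xs ! i)) (\<gamma> (xs ! ((i + 1) mod length xs)))" for i
  have "tour_cost (map \<gamma> xs) = (\<Sum>i<Suc k. g i)"
    unfolding tour_cost_def nxt_def g_def length_map k[symmetric] by (rule sum.cong) (simp_all add: k)
  hence cost: "tour_cost (map \<gamma> xs) = (\<Sum>i<k. g i) + g k" by simp
  have "(\<Sum>i<k. g i) \<le> (\<Sum>i<k. \<Lambda> (xs ! Suc i) - \<Lambda> (xs ! i))"
  proof (rule sum_mono)
    fix i assume "i \<in> {..<k}"
    hence i: "Suc i < length xs" using k by simp
    have "xs ! i \<le> xs ! Suc i" using sorted_nth_mono[OF sorted _ i] by simp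
    thus "g i \<le> \<Lambda> (xs ! Suc i) - \<Lambda> (xs ! i)"
      unfolding g_def using bd mem[of i] mem[OF i] i by simp
  qed
  also have "\<dots> = \<Lambda> (xs ! k) - \<Lambda> (xs ! 0)" by (rule sum_lessThan_telescope)
  finally have inner: "(\<Sum>i<k. g i) \<le> \<Lambda> (xs ! k) - \<Lambda> (xs ! 0)" .
  have ends: "xs ! 0 \<in> {w..W}" "xs ! k \<in> {w..W}" using mem k by auto
  have "g k \<le> dist (\<gamma> (xs ! k)) (\<gamma> W) + dist (\<gamma> w) (\<gamma> (xs ! 0))"
    unfolding g_def k using dist_triangle[of "\<gamma> (xs ! k)" "\<gamma> (xs ! 0)" "\<gamma> W"] closed by simp
  also have "\<dots> \<le> (\<Lambda> W - \<Lambda> (xs ! k)) + (\<Lambda> (xs ! 0) - \<Lambda> w)"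
    using bd[of "xs ! k" W] bd[of w "xs ! 0"] ends by (intro add_mono) auto
  finally show ?thesis using cost inner unfolding xs_def by simp
qed

lemma tour_along_curve:
  fixes \<gamma> :: "real \<Rightarrow> pt" and \<Lambda> :: "real \<Rightarrow> real"
  assumes "finite I" "I \<noteq> {}"
    and "\<And>s t. w \<le> s \<Longrightarrow> s \<le> t \<Longrightarrow> t \<le> W \<Longrightarrow> dist (\<gamma> s) (\<gamma> t) \<le> \<Lambda> t - \<Lambda> s"
    and "\<gamma> W = \<gamma> w"
    and visits: "\<forall>s\<in>I. \<exists>t\<in>{w..W}. \<gamma> t \<in> seg s"
  shows "\<exists>qs. is_tour I qs \<and> tour_cost qs \<le> \<Lambda> W - \<Lambda> w"
proof -
  have "\<forall>s\<in>I. \<exists>t. t \<in> {w..W} \<and> \<gamma> t \<in> seg s" using visits by blast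
  then obtain sample where sample: "\<And>s. s \<in> I \<Longrightarrow> sample s \<in> {w..W} \<and> \<gamma> (sample s) \<in> seg s"
    using bchoice[of I "\<lambda>s t. t \<in> {w..W} \<and> \<gamma> t \<in> seg s"] by blast
  define T where "T = sample ` I"
  have T: "finite T" "T \<noteq> {}" "T \<subseteq> {w..W}" unfolding T_def using assms(1,2) sample by auto
  define qs where "qs = map \<gamma> (sorted_list_of_set T)"
  have "set qs = \<gamma> ` sample ` I" unfolding qs_def using T(1) by (simp add: T_def)
  hence "is_tour I qs" unfolding is_tour_def using assms(2) sample by fastforce
  moreover have "tour_cost qs \<le> \<Lambda> W - \<Lambda> w"
    unfolding qs_def by (rule tour_cost_samples_le[OF assms(3,4) T]) auto
  ultimately show ?thesis by blast
qed

lemma mem_seg_iff: "p \<in> seg s \<longleftrightarrow> fst p = fst s \<and> snd s \<le> snd p \<and> snd p \<le> snd s + 1"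
proof
  assume "fst p = fst s \<and> snd s \<le> snd p \<and> snd p \<le> snd s + 1"
  moreover have "p = (fst s, snd s + (snd p - snd s))" using calculation by (simp add: prod_eq_iff)
  ultimately show "p \<in> seg s" unfolding seg_def by (intro CollectI exI[of _ "snd p - snd s"]) simp
qed (auto simp: seg_def)

lemma tour_visits_segment_in_period:
  assumes "is_tour I ps" "s \<in> I"
  shows "\<exists>t\<in>{a..a + real (length ps)}. tour_curve ps t \<in> seg s"
proof -
  have ne: "ps \<noteq> []" using assms(1) by (simp add: is_tour_def)
  obtain i where i: "i < length ps" "ps ! i \<in> seg s"
    using assms unfolding is_tour_def by (metis in_set_conv_nth)
  obtain m :: int where "a \<le> real i + of_int m * real (length ps)"
    "real i + of_int m * real (length ps) < a + real (length ps)"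
    using exists_shift_into_period[of "length ps"] ne by blast
  moreover have "tour_curve ps (real i + of_int m * real (length ps)) = ps ! i"
    using tour_curve_periodic[OF ne] tour_curve_of_nat[OF i(1)] by simp
  ultimately show ?thesis using i(2) by (intro bexI[of _ "real i + of_int m * real (length ps)"]) auto
qed

definition shortcut :: "pt list \<Rightarrow> real \<Rightarrow> real \<Rightarrow> real \<Rightarrow> pt" where
  "shortcut ps c b t = (if t \<le> b then proj_line c (tour_curve ps t) else tour_curve ps t)"

definition shortcut_arc :: "pt list \<Rightarrow> real \<Rightarrow> real \<Rightarrow> real \<Rightarrow> real" where
  "shortcut_arc ps c b t = (if t \<le> b then tour_arc (map (proj_line c) ps) t
     else tour_arc (map (proj_line c) ps) b + tour_arc ps t - tour_arc ps b)"

lemma dist_shortcut_le: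
  assumes ne: "ps \<noteq> []" and on_line: "snd (tour_curve ps b) = c" and "s \<le> t"
  shows "dist (shortcut ps c b s) (shortcut ps c b t) \<le> shortcut_arc ps c b t - shortcut_arc ps c b s"
proof -
  have arc: "dist (tour_curve ps s') (tour_curve ps t') \<le> tour_arc ps t' - tour_arc ps s'"
    and proj_arc: "dist (proj_line c (tour_curve ps s')) (proj_line c (tour_curve ps t'))
      \<le> tour_arc (map (proj_line c) ps) t' - tour_arc (map (proj_line c) ps) s'"
    if "s' \<le> t'" for s' t'
    using dist_tour_curve_le_tour_arc[OF ne that]
      dist_tour_curve_le_tour_arc[of "map (proj_line c) ps", OF _ that] ne
    by (simp_all add: tour_curve_map_proj_line)
  have Cb: "proj_line c (tour_curve ps b) = tour_curve ps b"
    using on_line by (simp add: proj_line_def prod_eq_iff)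
  consider "t \<le> b" | "s \<le> b" "b < t" | "b < s" using \<open>s \<le> t\<close> by linarith
  thus ?thesis
  proof cases
    case 1
    thus ?thesis using proj_arc[OF \<open>s \<le> t\<close>] \<open>s \<le> t\<close> by (simp add: shortcut_def shortcut_arc_def)
  next
    case 2
    have "dist (proj_line c (tour_curve ps s)) (tour_curve ps t)
        \<le> dist (proj_line c (tour_curve ps s)) (proj_line c (tour_curve ps b))
          + dist (tour_curve ps b) (tour_curve ps t)"
      using dist_triangle[of _ _ "tour_curve ps b"] Cb by metis
    thus ?thesis using 2 proj_arc[of s b] arc[of b t] by (simp add: shortcut_def shortcut_arc_def)
  next
    case 3
    thus ?thesis using arc[OF \<open>s \<le> t\<close>] \<open>s \<le> t\<close> by (simp add: shortcut_def shortcut_arc_def)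
  qed
qed

lemma shortcut_arc_period:
  assumes "ps \<noteq> []" "a \<le> b" "b < a + real (length ps)"
  shows "shortcut_arc ps c b (a + real (length ps)) - shortcut_arc ps c b a
    = tour_cost ps - (excess_length ps c b - excess_length ps c a)"
  using assms tour_arc_add_period[OF assms(1), of a]
  by (simp add: shortcut_arc_def excess_length_def)

lemma shortcut_visits_segment:
  assumes tour: "is_tour I ps" and "s \<in> I"
    and ab: "b < a + real (length ps)" and on_line: "snd (tour_curve ps b) = c"
    and revisit: "\<And>t. t \<in> {a..b} \<Longrightarrow> tour_curve ps t \<in> seg s \<Longrightarrow> seg s \<inter> {p. snd p = c} = {}
      \<Longrightarrow> \<exists>t'\<in>{b..a + real (length ps)}. tour_curve ps t' \<in> seg s"
  shows "\<exists>t\<in>{a..a + real (length ps)}. shortcut ps c b t \<in> seg s"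
proof -
  obtain t where t: "t \<in> {a..a + real (length ps)}" "tour_curve ps t \<in> seg s"
    using tour_visits_segment_in_period[OF tour \<open>s \<in> I\<close>] by blast
  consider "b < t" | "t \<le> b" "seg s \<inter> {p. snd p = c} \<noteq> {}" | "t \<le> b" "seg s \<inter> {p. snd p = c} = {}"
    by linarith
  thus ?thesis
  proof cases
    case 1
    thus ?thesis using t by (intro bexI[of _ t]) (auto simp: shortcut_def)
  next
    case 2
    then obtain q where q: "q \<in> seg s" "snd q = c" by blast
    have "shortcut ps c b t = q"
      using 2 q t(2) by (simp add: shortcut_def proj_line_def prod_eq_iff mem_seg_iff)
    thus ?thesis using t q by blast
  next
    case 3
    then obtain t' where t': "t' \<in> {b..a + real (length ps)}" "tour_curve ps t' \<in> seg s"
      using revisit[of t] t by auto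
    have "t' \<noteq> b" using t'(2) on_line 3(2) by auto
    hence "shortcut ps c b t' = tour_curve ps t'" using t'(1) by (simp add: shortcut_def)
    thus ?thesis using t' t(1) 3(1) by (intro bexI[of _ t']) auto
  qed
qed

lemma loop_leaving_line_has_private_segment:
  assumes opt: "is_OPT I ps" and "finite I"
    and ab: "a \<le> b" "b < a + real (length ps)"
    and on_line: "snd (tour_curve ps a) = c" "snd (tour_curve ps b) = c"
    and leaves: "\<not> tour_curve ps ` {a..b} \<subseteq> {p. snd p = c}"
  shows "\<exists>t\<in>{a..b}. \<exists>s\<in>I. tour_curve ps t \<in> seg s \<and> seg s \<inter> {p. snd p = c} = {} \<and>
           (\<forall>t'\<in>{b..a + real (length ps)}. tour_curve ps t' \<notin> seg s)"
proof (rule ccontr)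
  assume no_private: "\<not> ?thesis"
  have tour: "is_tour I ps" using opt by (simp add: is_OPT_def)
  hence ne: "ps \<noteq> []" and "I \<noteq> {}" unfolding is_tour_def by (auto simp: neq_Nil_conv)
  let ?W = "a + real (length ps)"
  have "shortcut ps c b ?W = shortcut ps c b a"
    using ab on_line(1) tour_curve_periodic[OF ne, of a 1]
    by (simp add: shortcut_def proj_line_def prod_eq_iff)
  moreover have "\<forall>s\<in>I. \<exists>t\<in>{a..?W}. shortcut ps c b t \<in> seg s"
    using shortcut_visits_segment[OF tour _ ab(2) on_line(2)] no_private by blast
  ultimately obtain qs where qs: "is_tour I qs"
    "tour_cost qs \<le> shortcut_arc ps c b ?W - shortcut_arc ps c b a"
    using tour_along_curve[where \<gamma> = "shortcut ps c b" and \<Lambda> = "shortcut_arc ps c b" and w = a,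
        OF \<open>finite I\<close> \<open>I \<noteq> {}\<close> dist_shortcut_le[OF ne on_line(2)]]
    by blast
  obtain t where t: "t \<in> {a..b}" "snd (tour_curve ps t) \<noteq> c" using leaves by blast
  hence "excess_length ps c a \<noteq> excess_length ps c t"
    using snd_tour_curve_eq_if_excess_length_eq[OF ne, of a t c] on_line(1) by auto
  moreover have "excess_length ps c a \<le> excess_length ps c t" "excess_length ps c t \<le> excess_length ps c b"
    using excess_length_mono[OF ne] t(1) by auto
  moreover have "tour_cost ps \<le> tour_cost qs" using opt qs(1) by (simp add: is_OPT_def)
  ultimately show False using qs(2) shortcut_arc_period[OF ne ab, of c] by linarith
qed

section \<open>Paths of a restricted tour\<close>

lemma restr_path_shorter_than_period:
  assumes ne: "ps \<noteq> []" and path: "restr_path ps S a b"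
  shows "b < a + real (length ps)"
proof (rule ccontr)
  assume "\<not> ?thesis"
  have "tour_curve ps u \<in> S" if "u \<in> {a - 1..b}" for u
  proof (cases "a \<le> u")
    case False
    moreover have "1 \<le> real (length ps)" using ne by (simp add: Suc_le_eq)
    ultimately have "u + of_int 1 * real (length ps) \<in> {a..b}"
      using that \<open>\<not> b < a + real (length ps)\<close> by simp
    hence "tour_curve ps (u + of_int 1 * real (length ps)) \<in> S"
      using path by (auto simp: restr_path_def)
    thus ?thesis by (simp only: tour_curve_periodic[OF ne])
  qed (use that path in \<open>auto simp: restr_path_def\<close>)
  hence "tour_curve ps ` {a - 1..b} \<subseteq> S" by blast
  moreover have "a - 1 \<le> a" "b \<le> b" by simp_all
  ultimately have "a - 1 = a" using path unfolding restr_path_def by blast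
  thus False by simp
qed

lemma restr_path_overlap_eq:
  assumes ne: "ps \<noteq> []" and path: "restr_path ps S a b" and path': "restr_path ps S a' b'"
    and overlap: "t \<in> {a..b}" "t \<in> {a' + of_int m * real (length ps)..b' + of_int m * real (length ps)}"
  shows "a' = a"
proof -
  define a2 b2 where "a2 = a' + of_int m * real (length ps)" and "b2 = b' + of_int m * real (length ps)"
  have img: "tour_curve ps ` {a..b} \<subseteq> S" "tour_curve ps ` {a2..b2} \<subseteq> S"
    using path path' tour_curve_image_shift[OF ne, of a' m b']
    by (simp_all add: restr_path_def a2_def b2_def)
  have "{min a a2..max b b2} \<subseteq> {a..b} \<union> {a2..b2}" using overlap by (auto simp: a2_def b2_def)
  hence "tour_curve ps ` {min a a2..max b b2} \<subseteq> S" using img by blast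
  hence "min a a2 = a \<and> max b b2 = b"
    using path unfolding restr_path_def by (meson min.cobounded1 max.cobounded1)
  hence "a - of_int m * real (length ps) \<le> a'" "b' \<le> b - of_int m * real (length ps)"
    by (auto simp: a2_def b2_def min_def max_def split: if_splits)
  moreover have "tour_curve ps ` {a + of_int (- m) * real (length ps)..b + of_int (- m) * real (length ps)} \<subseteq> S"
    using img(1) tour_curve_image_shift[OF ne, of a "- m" b] by simp
  ultimately have a': "a' = a - of_int m * real (length ps)"
    using path' unfolding restr_path_def by auto
  have "0 \<le> a" "a < real (length ps)" "0 \<le> a'" "a' < real (length ps)"
    using path path' by (simp_all add: restr_path_def)
  hence "\<bar>of_int m * real (length ps)\<bar> < 1 * real (length ps)"
    unfolding abs_less_iff using a' by linarith
  hence "\<bar>of_int m :: real\<bar> < 1"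
    using mult_less_cancel_right_pos[of "real (length ps)" "\<bar>of_int m\<bar>" 1] ne by (simp add: abs_mult)
  hence "m = 0" by linarith
  thus ?thesis using a' by simp
qed

lemma excl_covers_if_unvisited:
  assumes ne: "ps \<noteq> []" and path: "restr_path ps S a b"
    and t: "t \<in> {a..b}" "tour_curve ps t \<in> seg s"
    and unvisited: "\<forall>t'\<in>{b..a + real (length ps)}. tour_curve ps t' \<notin> seg s"
  shows "excl_covers ps S a b s"
  unfolding excl_covers_def
proof (intro conjI allI impI)
  show "tour_curve ps ` {a..b} \<inter> seg s \<noteq> {}" using t by blast
next
  fix a' b' assume other: "restr_path ps S a' b' \<and> a' \<noteq> a"
  show "tour_curve ps ` {a'..b'} \<inter> seg s = {}"
  proof (rule ccontr)
    assume "\<not> ?thesis"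
    then obtain t' where t': "t' \<in> {a'..b'}" "tour_curve ps t' \<in> seg s" by blast
    obtain m :: int where m: "a \<le> t' + of_int m * real (length ps)"
      "t' + of_int m * real (length ps) < a + real (length ps)"
      using exists_shift_into_period[of "length ps"] ne by blast
    have "tour_curve ps (t' + of_int m * real (length ps)) \<in> seg s"
      using t'(2) tour_curve_periodic[OF ne] by simp
    hence "t' + of_int m * real (length ps) \<in> {a..b}" using unvisited m by force
    moreover have "t' + of_int m * real (length ps)
        \<in> {a' + of_int m * real (length ps)..b' + of_int m * real (length ps)}" using t'(1) by simp
    ultimately have "a' = a" using restr_path_overlap_eq[OF ne path] other by blast
    thus False using other by blast
  qed
qed

lemma loop_leaving_line_excl_covers:
  assumes opt: "is_OPT I ps" and "finite I" and path: "restr_path ps S a b"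
    and loop: "loop_on ps {p. snd p = c} a b" and "\<not> cover_line_loop ps {p. snd p = c} a b"
  shows "\<exists>s\<in>I. \<exists>t\<in>{a..b}. tour_curve ps t \<in> seg s \<and> seg s \<inter> {p. snd p = c} = {}
    \<and> excl_covers ps S a b s"
proof -
  have ne: "ps \<noteq> []" using opt by (simp add: is_OPT_def is_tour_def)
  have "a \<le> b" using path by (simp add: restr_path_def)
  moreover note restr_path_shorter_than_period[OF ne path]
  moreover have "snd (tour_curve ps a) = c" "snd (tour_curve ps b) = c"
    using loop by (simp_all add: loop_on_def)
  moreover have "\<not> tour_curve ps ` {a..b} \<subseteq> {p. snd p = c}"
    using assms(5) loop by (simp add: cover_line_loop_def)
  ultimately show ?thesis
    using loop_leaving_line_has_private_segment[OF opt \<open>finite I\<close>] excl_covers_if_unvisited[OF ne path]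
    by metis
qed

lemma top_seg_if_misses_lower_line:
  assumes "s \<in> I" "p \<in> seg s" "p \<in> strip I \<tau>" "seg s \<inter> cover_line I (\<tau> + 1) = {}"
  shows "top_seg I \<tau> s"
proof -
  have "(fst s, cover_y I (\<tau> + 1)) \<notin> seg s" using assms(4) by (auto simp: cover_line_def)
  hence "(fst s, cover_y I \<tau>) \<in> seg s"
    using assms(2,3) by (auto simp: mem_seg_iff strip_def cover_y_def)
  thus ?thesis using assms(1) by (auto simp: top_seg_def cover_line_def)
qed

lemma bottom_seg_if_misses_upper_line:
  assumes "s \<in> I" "p \<in> seg s" "p \<in> strip I \<tau>" "seg s \<inter> cover_line I \<tau> = {}"
  shows "bottom_seg I \<tau> s"
proof -
  have "(fst s, cover_y I \<tau>) \<notin> seg s" using assms(4) by (auto simp: cover_line_def)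
  hence below: "snd s + 1 < cover_y I \<tau>"
    using assms(2,3) by (auto simp: mem_seg_iff strip_def)
  hence "(fst s, cover_y I (\<tau> + 1)) \<in> seg s"
    using assms(2,3) by (auto simp: mem_seg_iff strip_def cover_y_def)
  moreover have "seg s \<inter> cover_line I j = {}" if "j < \<tau> + 1" for j
    using below that by (auto simp: mem_seg_iff cover_line_def cover_y_def)
  ultimately show ?thesis using assms(1) by (auto simp: bottom_seg_def covered_by_def cover_line_def)
qed

theorem lemma19:
  fixes I :: "pt set" and ps :: "pt list" and \<tau> :: nat and a b :: real
  assumes "instance_ok I"
    and "height I > 3"
    and "is_OPT I ps"
    and "\<tau> \<ge> 1"
    and "restr_path ps (strip I \<tau>) a b"
  shows "(loop_on ps (cover_line I (\<tau> + 1)) a b \<longrightarrow>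
            (\<exists>s. top_seg I \<tau> s \<and> excl_covers ps (strip I \<tau>) a b s) \<or>
            cover_line_loop ps (cover_line I (\<tau> + 1)) a b)
       \<and> (loop_on ps (cover_line I \<tau>) a b \<longrightarrow>
            (\<exists>s. bottom_seg I \<tau> s \<and> excl_covers ps (strip I \<tau>) a b s) \<or>
            cover_line_loop ps (cover_line I \<tau>) a b)"
proof -
  have "finite I" using assms(1) by (simp add: instance_ok_def)
  have in_strip: "tour_curve ps ` {a..b} \<subseteq> strip I \<tau>" using assms(5) by (simp add: restr_path_def)
  have off_line: "\<exists>s\<in>I. \<exists>t\<in>{a..b}. tour_curve ps t \<in> seg s \<and> seg s \<inter> cover_line I k = {}
      \<and> excl_covers ps (strip I \<tau>) a b s"
    if "loop_on ps (cover_line I k) a b" "\<not> cover_line_loop ps (cover_line I k) a b" for k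
    using loop_leaving_line_excl_covers[OF assms(3) \<open>finite I\<close> assms(5), of "cover_y I k"] that
    unfolding cover_line_def by blast
  show ?thesis
    using off_line[of "\<tau> + 1"] off_line[of \<tau>] in_strip
      top_seg_if_misses_lower_line bottom_seg_if_misses_upper_line
    by blast
qed

end
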